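(* Let $X=X_\Sigma$ be the projective toric manifold described in the context, and suppose $p_2\ge2$ and $p_3\ge2$. Let $S$ be the torus invariant surface associated to the $(d-2)$-dimensional cone of $\Sigma$ generated by all ray generators except $v_1,z_1,z_2,t_1,t_2$. Then $S\cong\mathbb{P}^1\times\mathbb{P}^1$ and $(\mathrm{ch}_2(X)\cdot S)=-p_1-p_4<0$.
   Context: Let $N=\mathbb{Z}^d$ and let $\Sigma$ be a smooth projective complete fan in $N_\mathbb{R}$ whose set of primitive ray generators is $\{v_1,\dots,v_{p_0},y_1,\dots,y_{p_1},z_1,\dots,z_{p_2},t_1,\dots,t_{p_3},u_1,\dots,u_{p_4}\}$, where $p_0,\dots,p_4$ are positive integers with $p_0+p_1+p_2+p_3+p_4-3=d$. A primitive collection is a set of ray generators not generating a cone of $\Sigma$ while every proper subset does. The primitive collections of $\Sigma$ are exactly $\{v_i\}\cup\{y_j\}$, $\{y_j\}\cup\{z_j\}$, $\{z_j\}\cup\{t_j\}$, $\{t_j\}\cup\{u_j\}$, $\{u_j\}\cup\{v_j\}$ (all elements of the indicated groups), with primitive relations $v_1+\cdots+v_{p_0}+y_1+\cdots+y_{p_1}=c_2z_2+\cdots+c_{p_2}z_{p_2}+(b_1+1)t_1+\cdots+(b_{p_3}+1)t_{p_3}$, $y_1+\cdots+y_{p_1}+z_1+\cdots+z_{p_2}=u_1+\cdots+u_{p_4}$, $z_1+\cdots+z_{p_2}+t_1+\cdots+t_{p_3}=0$, $t_1+\cdots+t_{p_3}+u_1+\cdots+u_{p_4}=y_1+\cdots+y_{p_1}$,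 $u_1+\cdots+u_{p_4}+v_1+\cdots+v_{p_0}=c_2z_2+\cdots+c_{p_2}z_{p_2}+b_1t_1+\cdots+b_{p_3}t_{p_3}$, with $b_i,c_j\in\mathbb{Z}_{\ge0}$, and $c_2=\min_j c_j$, $b_1=\min_i b_i$. $X=X_\Sigma$. With $D_1,\dots,D_n$ the torus invariant prime divisors, $\mathrm{ch}_2(X)=\frac12\sum D_i^2$. *)

theory Defs
  imports "HOL-Analysis.Analysis"
begin

datatype ray = V nat | Y nat | Z nat | T nat | U nat

definition Vs :: "nat \<Rightarrow> ray set" where "Vs p = V ` {1..p}"
definition Ys :: "nat \<Rightarrow> ray set" where "Ys p = Y ` {1..p}"
definition Zs :: "nat \<Rightarrow> ray set" where "Zs p = Z ` {1..p}"
definition Ts :: "nat \<Rightarrow> ray set" where "Ts p = T ` {1..p}"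
definition Us :: "nat \<Rightarrow> ray set" where "Us p = U ` {1..p}"

definition allrays :: "nat \<Rightarrow> nat \<Rightarrow> nat \<Rightarrow> nat \<Rightarrow> nat \<Rightarrow> ray set" where
  "allrays p0 p1 p2 p3 p4 = Vs p0 \<union> Ys p1 \<union> Zs p2 \<union> Ts p3 \<union> Us p4"

definition ipair :: "int^'d \<Rightarrow> int^'d \<Rightarrow> int" where
  "ipair m v = (\<Sum>i\<in>UNIV. m$i * v$i)"

definition rvec :: "int^'d \<Rightarrow> real^'d" where
  "rvec v = (\<chi> i. real_of_int (v$i))"

definition cone_of :: "(ray \<Rightarrow> int^'d) \<Rightarrow> ray set \<Rightarrow> (real^'d) set" where
  "cone_of g \<sigma> = {\<Sum>k\<in>\<sigma>. c k *\<^sub>R rvec (g k) | c. \<forall>k. c k \<ge> 0}"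

definition zspan :: "(int^'d) set \<Rightarrow> (int^'d) set" where
  "zspan A = {\<Sum>a\<in>A. c a *s a | c. True}"

definition unimodular :: "(ray \<Rightarrow> int^'d) \<Rightarrow> ray set \<Rightarrow> bool" where
  "unimodular g \<sigma> \<longleftrightarrow> inj_on g \<sigma> \<and>
     (\<exists>B :: int^'d^'d. (det B = 1 \<or> det B = -1) \<and> g ` \<sigma> \<subseteq> {B$i | i. True})"

text \<open>K is the set of (sets of rays generating) cones of a smooth, complete, projective
  simplicial fan with ray set R and primitive ray generators g.\<close>
definition smooth_projective_complete_fan ::
  "ray set \<Rightarrow> ray set set \<Rightarrow> (ray \<Rightarrow> int^'d) \<Rightarrow> bool" where
  "smooth_projective_complete_fan R K g \<longleftrightarrow>
     finite R \<and> inj_on g R \<and>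
     {} \<in> K \<and> (\<forall>\<sigma>\<in>K. \<sigma> \<subseteq> R) \<and> (\<forall>\<sigma>\<in>K. \<forall>\<sigma>'. \<sigma>' \<subseteq> \<sigma> \<longrightarrow> \<sigma>' \<in> K) \<and>
     (\<forall>k\<in>R. {k} \<in> K) \<and>
     (\<forall>\<sigma>\<in>K. unimodular g \<sigma>) \<and>
     (\<forall>\<sigma>\<in>K. \<forall>\<sigma>'\<in>K. cone_of g \<sigma> \<inter> cone_of g \<sigma>' = cone_of g (\<sigma> \<inter> \<sigma>')) \<and>
     (\<Union>\<sigma>\<in>K. cone_of g \<sigma>) = UNIV \<and>
     (\<exists>\<phi> :: ray \<Rightarrow> real. \<forall>\<sigma>\<in>K. card \<sigma> = CARD('d) \<longrightarrow>
        (\<exists>m :: real^'d. (\<forall>k\<in>\<sigma>. m \<bullet> rvec (g k) = \<phi> k) \<and>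
                        (\<forall>k\<in>R - \<sigma>. m \<bullet> rvec (g k) > \<phi> k)))"

definition primitive_collection :: "ray set \<Rightarrow> ray set set \<Rightarrow> ray set \<Rightarrow> bool" where
  "primitive_collection R K C \<longleftrightarrow> C \<subseteq> R \<and> C \<notin> K \<and> (\<forall>x\<in>C. C - {x} \<in> K)"

text \<open>For a cone \<tau> and a ray \<rho> in \<tau>: a character m with <m,g \<rho>> = 1 and
  <m,g j> = 0 for the other rays j of \<tau> (exists by smoothness).\<close>
definition dualm :: "(ray \<Rightarrow> int^'d) \<Rightarrow> ray set \<Rightarrow> ray \<Rightarrow> int^'d" where
  "dualm g \<tau> \<rho> = (SOME m. ipair m (g \<rho>) = 1 \<and> (\<forall>j\<in>\<tau> - {\<rho>}. ipair m (g j) = 0))"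

text \<open>Coefficients of a divisor linearly equivalent to D_\<rho> whose support avoids
  the divisors D_j, j \<in> \<tau>  (D_\<rho> itself if \<rho> \<notin> \<tau>; else D_\<rho> - div(\<chi>^m)).\<close>
definition restr :: "(ray \<Rightarrow> int^'d) \<Rightarrow> ray set \<Rightarrow> ray \<Rightarrow> ray \<Rightarrow> int" where
  "restr g \<tau> \<rho> k =
     (if \<rho> \<notin> \<tau> then (if k = \<rho> then 1 else 0)
      else if k \<in> \<tau> then 0 else - ipair (dualm g \<tau> \<rho>) (g k))"

text \<open>(D_\<rho> . V(\<gamma>)) for a (d-1)-dimensional cone \<gamma> (a torus invariant curve).\<close>
definition curve_deg :: "ray set \<Rightarrow> ray set set \<Rightarrow> (ray \<Rightarrow> int^'d) \<Rightarrow> ray set \<Rightarrow> ray \<Rightarrow> int" where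
  "curve_deg R K g \<gamma> \<rho> = (\<Sum>k\<in>R - \<gamma>. restr g \<gamma> \<rho> k * (if insert k \<gamma> \<in> K then 1 else 0))"

text \<open>(D_\<rho> . D_\<rho>' . V(\<tau>)) for a (d-2)-dimensional cone \<tau> (a torus invariant surface).\<close>
definition surf_int :: "ray set \<Rightarrow> ray set set \<Rightarrow> (ray \<Rightarrow> int^'d) \<Rightarrow> ray set \<Rightarrow> ray \<Rightarrow> ray \<Rightarrow> int" where
  "surf_int R K g \<tau> \<rho> \<rho>' =
     (\<Sum>k\<in>R - \<tau>. restr g \<tau> \<rho> k * (if insert k \<tau> \<in> K then curve_deg R K g (insert k \<tau>) \<rho>' else 0))"

text \<open>(ch_2(X) . V(\<tau>)) with ch_2(X) = 1/2 \<Sum> D_i^2.\<close>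
definition ch2_dot :: "ray set \<Rightarrow> ray set set \<Rightarrow> (ray \<Rightarrow> int^'d) \<Rightarrow> ray set \<Rightarrow> real" where
  "ch2_dot R K g \<tau> = (1/2) * (\<Sum>\<rho>\<in>R. real_of_int (surf_int R K g \<tau> \<rho> \<rho>))"

text \<open>The fan of V(\<tau>) is the star of \<tau> in the quotient lattice N / N_\<tau>.
  We require a lattice isomorphism N / N_\<tau> \<cong> Z^2 (given by a surjective map
  v \<mapsto> (<m1,v>,<m2,v>) with kernel the Z-span of the generators of \<tau>) carrying the
  star fan onto the fan of P^1 x P^1 (rays \<plusminus>e1, \<plusminus>e2, maximal cones the four quadrants).\<close>
definition surface_is_P1xP1 :: "ray set \<Rightarrow> ray set set \<Rightarrow> (ray \<Rightarrow> int^'d) \<Rightarrow> ray set \<Rightarrow> bool" where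
  "surface_is_P1xP1 R K g \<tau> \<longleftrightarrow> \<tau> \<in> K \<and>
     (\<exists>m1 m2 :: int^'d.
        let \<phi> = (\<lambda>v. (ipair m1 v, ipair m2 v));
            star = {k\<in>R - \<tau>. insert k \<tau> \<in> K}
        in (\<forall>w. \<exists>v. \<phi> v = w) \<and>
           {v. \<phi> v = (0,0)} = zspan (g ` \<tau>) \<and>
           bij_betw (\<phi> \<circ> g) star {(1,0),(0,1),(-1,0),(0,-1)} \<and>
           (\<forall>k\<in>star. \<forall>k'\<in>star. k \<noteq> k' \<longrightarrow>
              ({k,k'} \<union> \<tau> \<in> K \<longleftrightarrow> \<phi> (g k) \<noteq> - \<phi> (g k'))))"

end

theory Submission
  imports Defs
begin

text \<open>The star of \<open>\<tau>\<close> consists of the four walls obtained by adding Z 1, Z 2, T 1 or T 2;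
  in the dual basis of the maximal cone \<open>\<tau> \<union> {Z 1, T 1}\<close> the rays Z 2 and T 2 point opposite
  to Z 1 and T 1, so the star is the fan of \<open>P\<^sup>1 \<times> P\<^sup>1\<close>. The primitive relations
  \<open>y + z = u\<close> and \<open>t + u = y\<close> are the wall relations of the curves of \<open>S\<close>, so they give
  the degrees of every \<open>D\<^sub>\<rho>\<close> on these curves, and \<open>(D\<^sub>\<rho>\<^sup>2 \<cdot> S) = 2 a\<^sub>\<rho> b\<^sub>\<rho>\<close> with
  \<open>a\<close>, \<open>b\<close> the coefficients of the two relations. Only the rays \<open>y\<^sub>j\<close> and \<open>u\<^sub>j\<close>
  occur in both relations, with product \<open>-1\<close>, whence \<open>(ch\<^sub>2(X) \<cdot> S) = -p\<^sub>1 - p\<^sub>4\<close>.\<close>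

definition real_mat :: "int^'n^'m \<Rightarrow> real^'n^'m" where
  "real_mat A = (\<chi> i j. real_of_int (A$i$j))"

lemma real_mat_nth [simp]: "real_mat A $ i $ j = real_of_int (A $ i $ j)"
  by (simp add: real_mat_def)

lemma det_real_mat: "det (real_mat A) = real_of_int (det A)"
  unfolding det_def real_mat_def by (simp add: of_int_sum of_int_prod)

lemma real_mat_mult: "real_mat (A ** B) = real_mat A ** real_mat B"
  by (simp add: real_mat_def matrix_matrix_mult_def of_int_sum vec_eq_iff)

lemma real_mat_1: "real_mat (mat 1) = mat 1"
  by (simp add: real_mat_def mat_def vec_eq_iff)

lemma real_mat_inject: "real_mat A = real_mat B \<longleftrightarrow> A = B"
  by (simp add: real_mat_def vec_eq_iff)

lemma int_matrix_inverse:
  fixes B :: "int^'n^'n"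
  assumes unit: "det B = 1 \<or> det B = -1"
  shows "\<exists>M. B ** M = mat 1 \<and> M ** B = mat 1"
proof -
  \<comment> \<open>Cramer's rule: the inverse has the integer entries det B * det (C i k), where C i k
    is B with its k-th column replaced by the i-th unit vector.\<close>
  define C :: "'n \<Rightarrow> 'n \<Rightarrow> int^'n^'n" where
    "C i k = (\<chi> a c. if c = k then (if a = i then 1 else 0) else B$a$c)" for i k
  define M :: "int^'n^'n" where "M = (\<chi> k i. det B * det (C i k))"
  have det_nz: "det (real_mat B) \<noteq> 0" using unit by (auto simp: det_real_mat)
  have entry: "column i (real_mat M) $ k
      = det (\<chi> a c. if c = k then axis i 1 $ a else real_mat B $ a $ c) / det (real_mat B)" for i k
  proof -
    have "(\<chi> a c. if c = k then axis i 1 $ a else real_mat B $ a $ c) = real_mat (C i k)"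
      by (simp add: C_def axis_def vec_eq_iff)
    then show ?thesis using unit by (auto simp: column_def M_def det_real_mat)
  qed
  have column: "real_mat B *v column i (real_mat M) = axis i 1" for i
    using cramer[OF det_nz, of "column i (real_mat M)" "axis i 1"] entry by (simp add: vec_eq_iff)
  have "real_mat B ** real_mat M = mat 1"
    using column by (simp add: vec_eq_iff matrix_matrix_mult_def matrix_vector_mult_def
        column_def axis_def mat_def)
  then have "real_mat (B ** M) = real_mat (mat 1)" "real_mat (M ** B) = real_mat (mat 1)"
    using matrix_left_right_inverse by (auto simp: real_mat_mult real_mat_1)
  then show ?thesis by (auto simp: real_mat_inject)
qed

lemma ipair_sum: "ipair m (sum f A) = (\<Sum>a\<in>A. ipair m (f a))"
  unfolding ipair_def by (simp add: sum_distrib_left sum.swap[of _ UNIV A])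

lemma ipair_smult: "ipair m (c *s v) = c * ipair m v"
  unfolding ipair_def by (simp add: sum_distrib_left mult.assoc mult.left_commute)

lemma ipair_add: "ipair m (v + w) = ipair m v + ipair m w"
  unfolding ipair_def by (simp add: distrib_left sum.distrib)

lemma unimodular_dual_basis:
  fixes g :: "ray \<Rightarrow> int^'d"
  assumes "unimodular g \<sigma>"
  obtains m where "\<And>k j. k \<in> \<sigma> \<Longrightarrow> j \<in> \<sigma> \<Longrightarrow> ipair (m k) (g j) = (if j = k then 1 else 0)"
    and "\<And>v. card \<sigma> = CARD('d) \<Longrightarrow> v = (\<Sum>k\<in>\<sigma>. ipair (m k) v *s g k)"
proof -
  obtain B :: "int^'d^'d" where inj: "inj_on g \<sigma>" and unit: "det B = 1 \<or> det B = -1"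
    and rows: "g ` \<sigma> \<subseteq> {B$i | i. True}"
    using assms unfolding unimodular_def by blast
  obtain M where BM: "B ** M = mat 1" and MB: "M ** B = mat 1"
    using int_matrix_inverse[OF unit] by blast
  define r where "r k = (SOME i. B$i = g k)" for k
  have r: "B $ r k = g k" if "k \<in> \<sigma>" for k
    using rows that unfolding r_def by (metis (mono_tags, lifting) image_eqI mem_Collect_eq someI_ex subsetD)
  have r_inj: "inj_on r \<sigma>" using inj r by (metis inj_on_def)
  define m where "m k = (\<chi> a. M$a$(r k))" for k
  have ipair_row: "ipair (m k) (B$i) = (B ** M)$i$(r k)" for k i
    unfolding ipair_def m_def matrix_matrix_mult_def by (simp add: mult.commute)
  have dual: "ipair (m k) (g j) = (if j = k then 1 else 0)" if "k \<in> \<sigma>" "j \<in> \<sigma>" for k j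
    using that ipair_row[of k "r j"] r_inj by (auto simp: r BM mat_def inj_on_def)
  have span: "v = (\<Sum>k\<in>\<sigma>. ipair (m k) v *s g k)" if card: "card \<sigma> = CARD('d)" for v
  proof -
    have r_onto: "r ` \<sigma> = UNIV"
      by (metis card card_image card_subset_eq finite subset_UNIV r_inj)
    have "v = (v v* M) v* B" using MB by (simp add: vector_matrix_mul_assoc)
    also have "\<dots> = (\<Sum>i\<in>UNIV. (v v* M)$i *s B$i)"
      by (simp add: vector_matrix_mult_def vec_eq_iff sum_component mult.commute)
    also have "\<dots> = (\<Sum>k\<in>\<sigma>. (v v* M)$(r k) *s B$(r k))"
      by (simp add: r_onto[symmetric] sum.reindex[OF r_inj])
    also have "\<dots> = (\<Sum>k\<in>\<sigma>. ipair (m k) v *s g k)"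
      by (rule sum.cong) (auto simp: r m_def ipair_def vector_matrix_mult_def mult.commute)
    finally show ?thesis .
  qed
  show ?thesis by (rule that[OF dual span])
qed

lemma smooth_projective_complete_fanD:
  fixes g :: "ray \<Rightarrow> int^'d"
  assumes "smooth_projective_complete_fan R K g"
  shows "finite R" "inj_on g R" "\<sigma> \<in> K \<Longrightarrow> \<sigma> \<subseteq> R"
    "\<sigma> \<in> K \<Longrightarrow> \<sigma>' \<subseteq> \<sigma> \<Longrightarrow> \<sigma>' \<in> K" "\<sigma> \<in> K \<Longrightarrow> unimodular g \<sigma>"
proof -
  have "finite R \<and> inj_on g R \<and> (\<forall>\<sigma>\<in>K. \<sigma> \<subseteq> R) \<and>
      (\<forall>\<sigma>\<in>K. \<forall>\<sigma>'. \<sigma>' \<subseteq> \<sigma> \<longrightarrow> \<sigma>' \<in> K) \<and> (\<forall>\<sigma>\<in>K. unimodular g \<sigma>)"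
    using assms unfolding smooth_projective_complete_fan_def by (elim conjE) (intro conjI; assumption)
  then show "finite R" "inj_on g R" "\<sigma> \<in> K \<Longrightarrow> \<sigma> \<subseteq> R"
    "\<sigma> \<in> K \<Longrightarrow> \<sigma>' \<subseteq> \<sigma> \<Longrightarrow> \<sigma>' \<in> K" "\<sigma> \<in> K \<Longrightarrow> unimodular g \<sigma>"
    by blast+
qed

lemma fan_mem_iff_no_primitive_collection:
  fixes g :: "ray \<Rightarrow> int^'d"
  assumes fan: "smooth_projective_complete_fan R K g"
    and prim: "\<And>C. primitive_collection R K C \<longleftrightarrow> C \<in> P"
    and "S \<subseteq> R"
  shows "S \<in> K \<longleftrightarrow> (\<forall>C\<in>P. \<not> C \<subseteq> S)"
proof
  assume "S \<in> K"
  then have "C \<in> K" if "C \<subseteq> S" for C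
    using smooth_projective_complete_fanD(4)[OF fan] that by blast
  then show "\<forall>C\<in>P. \<not> C \<subseteq> S"
    using prim unfolding primitive_collection_def by blast
next
  assume no_prim: "\<forall>C\<in>P. \<not> C \<subseteq> S"
  show "S \<in> K"
  proof (rule ccontr)
    assume "S \<notin> K"
    \<comment> \<open>A non-face of least cardinality inside S is a primitive collection.\<close>
    then obtain C where C: "C \<subseteq> S" "C \<notin> K"
      and least: "\<And>C'. C' \<subseteq> S \<Longrightarrow> C' \<notin> K \<Longrightarrow> card C \<le> card C'"
      using ex_has_least_nat[of "\<lambda>C. C \<subseteq> S \<and> C \<notin> K" S card] by blast
    have "finite C"
      using C(1) \<open>S \<subseteq> R\<close> smooth_projective_complete_fanD(1)[OF fan] by (meson finite_subset)
    then have "C - {x} \<in> K" if "x \<in> C" for x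
      using least[of "C - {x}"] C(1) that card_Diff1_less by fastforce
    then have "C \<in> P"
      using prim C \<open>S \<subseteq> R\<close> unfolding primitive_collection_def by blast
    with no_prim C(1) show False by blast
  qed
qed

definition linear_relation :: "ray set \<Rightarrow> (ray \<Rightarrow> int^'d) \<Rightarrow> (ray \<Rightarrow> int) \<Rightarrow> bool" where
  "linear_relation R g a \<longleftrightarrow> (\<Sum>k\<in>R. a k *s g k) = 0"

lemma linear_relation_eval:
  assumes rel: "linear_relation R g a" and "finite R" "\<sigma> \<subseteq> R" "\<rho> \<in> \<sigma>"
    and "ipair m (g \<rho>) = 1" "\<forall>j\<in>\<sigma> - {\<rho>}. ipair m (g j) = 0"
  shows "a \<rho> + (\<Sum>k\<in>R - \<sigma>. a k * ipair m (g k)) = 0"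
proof -
  have "finite \<sigma>" using assms finite_subset by blast
  have "0 = ipair m (\<Sum>k\<in>R. a k *s g k)"
    using rel unfolding linear_relation_def by (simp add: ipair_def)
  also have "\<dots> = (\<Sum>k\<in>R. a k * ipair m (g k))"
    by (simp add: ipair_sum ipair_smult)
  also have "\<dots> = (\<Sum>k\<in>\<sigma>. a k * ipair m (g k)) + (\<Sum>k\<in>R - \<sigma>. a k * ipair m (g k))"
    using assms(2,3) by (metis add.commute sum.subset_diff)
  also have "(\<Sum>k\<in>\<sigma>. a k * ipair m (g k)) = a \<rho>"
    using \<open>finite \<sigma>\<close> assms(4-6) by (simp add: sum.remove)
  finally show ?thesis by simp
qed

lemma dualm_eval:
  fixes g :: "ray \<Rightarrow> int^'d"
  assumes "unimodular g \<sigma>" "\<rho> \<in> \<sigma>"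
  shows "ipair (dualm g \<sigma> \<rho>) (g \<rho>) = 1 \<and> (\<forall>j\<in>\<sigma> - {\<rho>}. ipair (dualm g \<sigma> \<rho>) (g j) = 0)"
proof -
  obtain m where "\<And>k j. k \<in> \<sigma> \<Longrightarrow> j \<in> \<sigma> \<Longrightarrow> ipair (m k) (g j) = (if j = k then 1 else 0)"
    using unimodular_dual_basis[OF assms(1)] by metis
  then have "\<exists>m. ipair m (g \<rho>) = 1 \<and> (\<forall>j\<in>\<sigma> - {\<rho>}. ipair m (g j) = 0)"
    using assms(2) by (intro exI[of _ "m \<rho>"]) auto
  then show ?thesis unfolding dualm_def by (rule someI_ex)
qed

lemma linear_relation_eval_dualm:
  assumes fan: "smooth_projective_complete_fan R K g"
    and "linear_relation R g a" "\<sigma> \<in> K" "\<rho> \<in> \<sigma>"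
  shows "a \<rho> + (\<Sum>k\<in>R - \<sigma>. a k * ipair (dualm g \<sigma> \<rho>) (g k)) = 0"
  using linear_relation_eval[OF assms(2) smooth_projective_complete_fanD(1)[OF fan]
      smooth_projective_complete_fanD(3)[OF fan assms(3)] assms(4)]
    dualm_eval[OF smooth_projective_complete_fanD(5)[OF fan assms(3)] assms(4)] by simp

lemma curve_deg_eq_wall_relation:
  assumes fan: "smooth_projective_complete_fan R K g"
    and "\<gamma> \<in> K" "\<rho> \<in> \<gamma>" "linear_relation R g a"
    and wall: "\<forall>k\<in>R - \<gamma>. a k = (if insert k \<gamma> \<in> K then 1 else 0)"
  shows "curve_deg R K g \<gamma> \<rho> = a \<rho>"
proof -
  have "curve_deg R K g \<gamma> \<rho> = - (\<Sum>k\<in>R - \<gamma>. a k * ipair (dualm g \<gamma> \<rho>) (g k))"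
    unfolding curve_deg_def sum_negf[symmetric]
    by (rule sum.cong) (use \<open>\<rho> \<in> \<gamma>\<close> wall in \<open>auto simp: restr_def\<close>)
  then show ?thesis using linear_relation_eval_dualm[OF assms(1,4,2,3)] by simp
qed

lemma surf_int_self_two_wall_pairs:
  fixes g :: "ray \<Rightarrow> int^'d"
  assumes fan: "smooth_projective_complete_fan R K g" and "\<tau> \<in> K"
    and star: "{k \<in> R - \<tau>. insert k \<tau> \<in> K} = A \<union> B" and "A \<inter> B = {}"
    and rel_a: "linear_relation R g a" and a_out: "\<forall>k\<in>R - \<tau>. a k = (if k \<in> A then 1 else 0)"
    and rel_b: "linear_relation R g b" and b_out: "\<forall>k\<in>R - \<tau>. b k = (if k \<in> B then 1 else 0)"
    and curve_A: "\<And>k \<rho>. k \<in> A \<Longrightarrow> \<rho> \<in> insert k \<tau> \<Longrightarrow> curve_deg R K g (insert k \<tau>) \<rho> = b \<rho>"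
    and curve_B: "\<And>k \<rho>. k \<in> B \<Longrightarrow> \<rho> \<in> insert k \<tau> \<Longrightarrow> curve_deg R K g (insert k \<tau>) \<rho> = a \<rho>"
    and "\<rho> \<in> R"
  shows "surf_int R K g \<tau> \<rho> \<rho> = 2 * a \<rho> * b \<rho>"
proof -
  define F where "F k = (if insert k \<tau> \<in> K then curve_deg R K g (insert k \<tau>) \<rho> else 0)" for k
  have F: "F k = a k * b \<rho> + b k * a \<rho>" if "k \<in> R - \<tau>" "\<rho> \<in> insert k \<tau>" for k
  proof -
    have "insert k \<tau> \<in> K \<longleftrightarrow> k \<in> A \<or> k \<in> B" using star that(1) by blast
    moreover have "a k = (if k \<in> A then 1 else 0)" "b k = (if k \<in> B then 1 else 0)"
      using a_out b_out that(1) by auto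
    ultimately show ?thesis
      using \<open>A \<inter> B = {}\<close> curve_A[OF _ that(2)] curve_B[OF _ that(2)] unfolding F_def by auto
  qed
  show ?thesis
  proof (cases "\<rho> \<in> \<tau>")
    case True
    let ?x = "\<lambda>k. ipair (dualm g \<tau> \<rho>) (g k)"
    have "surf_int R K g \<tau> \<rho> \<rho> = (\<Sum>k\<in>R - \<tau>. - ?x k * (a k * b \<rho> + b k * a \<rho>))"
      unfolding surf_int_def F_def[symmetric] by (rule sum.cong) (use True F in \<open>auto simp: restr_def\<close>)
    also have "\<dots> = - b \<rho> * (\<Sum>k\<in>R - \<tau>. a k * ?x k) - a \<rho> * (\<Sum>k\<in>R - \<tau>. b k * ?x k)"
      unfolding sum_distrib_left sum_subtractf[symmetric] by (rule sum.cong) (simp_all add: algebra_simps)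
    also have "\<dots> = 2 * a \<rho> * b \<rho>"
      using linear_relation_eval_dualm[OF fan rel_a \<open>\<tau> \<in> K\<close> True]
        linear_relation_eval_dualm[OF fan rel_b \<open>\<tau> \<in> K\<close> True] by algebra
    finally show ?thesis .
  next
    case False
    have "finite R" by (rule smooth_projective_complete_fanD(1)[OF fan])
    have "surf_int R K g \<tau> \<rho> \<rho> = (\<Sum>k\<in>R - \<tau>. if k = \<rho> then F k else 0)"
      unfolding surf_int_def F_def[symmetric] by (rule sum.cong) (use False in \<open>auto simp: restr_def\<close>)
    also have "\<dots> = F \<rho>" using False \<open>\<rho> \<in> R\<close> \<open>finite R\<close> by simp
    also have "\<dots> = 2 * a \<rho> * b \<rho>" using False \<open>\<rho> \<in> R\<close> F by simp
    finally show ?thesis .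
  qed
qed

lemma dual_kernel_eq_zspan:
  assumes dual: "\<And>k j. k \<in> \<sigma> \<Longrightarrow> j \<in> \<sigma> \<Longrightarrow> ipair (m k) (g j) = (if j = k then 1 else 0)"
    and span: "\<And>v. v = (\<Sum>k\<in>\<sigma>. ipair (m k) v *s g k)"
    and "finite \<sigma>" "\<tau> \<subseteq> \<sigma>" "inj_on g \<tau>"
  shows "{v. \<forall>k\<in>\<sigma> - \<tau>. ipair (m k) v = 0} = zspan (g ` \<tau>)"
proof (intro set_eqI iffI)
  fix v assume "v \<in> {v. \<forall>k\<in>\<sigma> - \<tau>. ipair (m k) v = 0}"
  then have "(\<Sum>k\<in>\<sigma>. ipair (m k) v *s g k) = (\<Sum>k\<in>\<tau>. ipair (m k) v *s g k)"
    by (intro sum.mono_neutral_right[OF \<open>finite \<sigma>\<close> \<open>\<tau> \<subseteq> \<sigma>\<close>]) simp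
  then have "v = (\<Sum>k\<in>\<tau>. ipair (m k) v *s g k)"
    using span[of v] by simp
  also have "\<dots> = (\<Sum>w\<in>g ` \<tau>. ipair (m (inv_into \<tau> g w)) v *s w)"
    by (simp add: sum.reindex[OF \<open>inj_on g \<tau>\<close>] inv_into_f_f[OF \<open>inj_on g \<tau>\<close>])
  finally show "v \<in> zspan (g ` \<tau>)"
    unfolding zspan_def by (intro CollectI exI[of _ "\<lambda>w. ipair (m (inv_into \<tau> g w)) v"]) simp
next
  fix v assume "v \<in> zspan (g ` \<tau>)"
  then obtain c where "v = (\<Sum>w\<in>g ` \<tau>. c w *s w)" unfolding zspan_def by blast
  moreover have "ipair (m k) w = 0" if "k \<in> \<sigma> - \<tau>" "w \<in> g ` \<tau>" for k w
    using that dual \<open>\<tau> \<subseteq> \<sigma>\<close> by auto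
  ultimately show "v \<in> {v. \<forall>k\<in>\<sigma> - \<tau>. ipair (m k) v = 0}"
    by (simp add: ipair_sum ipair_smult)
qed

lemma mem_Vs [simp]: "k \<in> Vs p \<longleftrightarrow> (case k of V i \<Rightarrow> 1 \<le> i \<and> i \<le> p | _ \<Rightarrow> False)"
  by (cases k) (auto simp: Vs_def)

lemma mem_Ys [simp]: "k \<in> Ys p \<longleftrightarrow> (case k of Y i \<Rightarrow> 1 \<le> i \<and> i \<le> p | _ \<Rightarrow> False)"
  by (cases k) (auto simp: Ys_def)

lemma mem_Zs [simp]: "k \<in> Zs p \<longleftrightarrow> (case k of Z i \<Rightarrow> 1 \<le> i \<and> i \<le> p | _ \<Rightarrow> False)"
  by (cases k) (auto simp: Zs_def)

lemma mem_Ts [simp]: "k \<in> Ts p \<longleftrightarrow> (case k of T i \<Rightarrow> 1 \<le> i \<and> i \<le> p | _ \<Rightarrow> False)"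
  by (cases k) (auto simp: Ts_def)

lemma mem_Us [simp]: "k \<in> Us p \<longleftrightarrow> (case k of U i \<Rightarrow> 1 \<le> i \<and> i \<le> p | _ \<Rightarrow> False)"
  by (cases k) (auto simp: Us_def)

lemma sum_allrays:
  "(\<Sum>k\<in>allrays p0 p1 p2 p3 p4. F k) = (\<Sum>i=1..p0. F (V i)) + (\<Sum>i=1..p1. F (Y i)) +
     (\<Sum>i=1..p2. F (Z i)) + (\<Sum>i=1..p3. F (T i)) + (\<Sum>i=1..p4. F (U i))"
proof -
  have "(\<Sum>k\<in>allrays p0 p1 p2 p3 p4. F k)
      = sum F (Vs p0) + sum F (Ys p1) + sum F (Zs p2) + sum F (Ts p3) + sum F (Us p4)"
  proof -
    have "finite (Vs p)" "finite (Ys p)" "finite (Zs p)" "finite (Ts p)" "finite (Us p)" for p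
      unfolding Vs_def Ys_def Zs_def Ts_def Us_def by simp_all
    moreover have "Vs p0 \<inter> Ys p1 = {}" "(Vs p0 \<union> Ys p1) \<inter> Zs p2 = {}"
      "(Vs p0 \<union> Ys p1 \<union> Zs p2) \<inter> Ts p3 = {}" "(Vs p0 \<union> Ys p1 \<union> Zs p2 \<union> Ts p3) \<inter> Us p4 = {}"
      by (auto split: ray.splits)
    ultimately show ?thesis unfolding allrays_def by (simp add: sum.union_disjoint)
  qed
  also have "\<dots> = (\<Sum>i=1..p0. F (V i)) + (\<Sum>i=1..p1. F (Y i)) +
     (\<Sum>i=1..p2. F (Z i)) + (\<Sum>i=1..p3. F (T i)) + (\<Sum>i=1..p4. F (U i))"
    unfolding Vs_def Ys_def Zs_def Ts_def Us_def by (simp add: sum.reindex inj_on_def)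
  finally show ?thesis .
qed

definition relation_YZU :: "ray \<Rightarrow> int" where
  "relation_YZU k = (case k of Y _ \<Rightarrow> 1 | Z _ \<Rightarrow> 1 | U _ \<Rightarrow> -1 | _ \<Rightarrow> 0)"

definition relation_TUY :: "ray \<Rightarrow> int" where
  "relation_TUY k = (case k of T _ \<Rightarrow> 1 | U _ \<Rightarrow> 1 | Y _ \<Rightarrow> -1 | _ \<Rightarrow> 0)"

locale pentagon_fan =
  fixes p0 p1 p2 p3 p4 :: nat and g :: "ray \<Rightarrow> int^'d" and K :: "ray set set"
  assumes pos: "p0 \<ge> 1" "p1 \<ge> 1" "p2 \<ge> 2" "p3 \<ge> 2" "p4 \<ge> 1"
    and dim: "CARD('d) = p0 + p1 + p2 + p3 + p4 - 3"
    and fan: "smooth_projective_complete_fan (allrays p0 p1 p2 p3 p4) K g"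
    and prim: "\<And>C. primitive_collection (allrays p0 p1 p2 p3 p4) K C \<longleftrightarrow>
                 C \<in> {Vs p0 \<union> Ys p1, Ys p1 \<union> Zs p2, Zs p2 \<union> Ts p3, Ts p3 \<union> Us p4, Us p4 \<union> Vs p0}"
    and rel_YZU: "(\<Sum>j=1..p1. g (Y j)) + (\<Sum>j=1..p2. g (Z j)) = (\<Sum>j=1..p4. g (U j))"
    and rel_TUY: "(\<Sum>j=1..p3. g (T j)) + (\<Sum>j=1..p4. g (U j)) = (\<Sum>j=1..p1. g (Y j))"
begin

text \<open>Keep ray labels such as \<open>V 1\<close> from being rewritten to \<open>V (Suc 0)\<close>.\<close>
declare One_nat_def [simp del]

abbreviation rays :: "ray set" where
  "rays \<equiv> allrays p0 p1 p2 p3 p4"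

definition surface_cone :: "ray set" where
  "surface_cone = rays - {V 1, Z 1, Z 2, T 1, T 2}"

lemma special_rays_mem [simp]: "V 1 \<in> rays" "Z 1 \<in> rays" "Z 2 \<in> rays" "T 1 \<in> rays" "T 2 \<in> rays"
  using pos by (simp_all add: allrays_def)

lemma insert_rays_minus: "k \<in> rays \<Longrightarrow> insert k (rays - E) = rays - (E - {k})"
  by auto

lemma rays_minus_mem_iff:
  assumes "E \<subseteq> {V 1, Z 1, Z 2, T 1, T 2}"
  shows "rays - E \<in> K \<longleftrightarrow> V 1 \<in> E \<and> (Z 1 \<in> E \<or> Z 2 \<in> E) \<and> (T 1 \<in> E \<or> T 2 \<in> E)"
proof -
  have avoids: "C \<subseteq> rays - E \<longleftrightarrow> C \<inter> {V 1, Z 1, Z 2, T 1, T 2} \<inter> E = {}" if "C \<subseteq> rays" for C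
    using that assms by blast
  have sub: "Vs p0 \<union> Ys p1 \<subseteq> rays" "Ys p1 \<union> Zs p2 \<subseteq> rays" "Zs p2 \<union> Ts p3 \<subseteq> rays"
    "Ts p3 \<union> Us p4 \<subseteq> rays" "Us p4 \<union> Vs p0 \<subseteq> rays"
    by (auto simp: allrays_def)
  have meet: "(Vs p0 \<union> Ys p1) \<inter> {V 1, Z 1, Z 2, T 1, T 2} = {V 1}"
    "(Ys p1 \<union> Zs p2) \<inter> {V 1, Z 1, Z 2, T 1, T 2} = {Z 1, Z 2}"
    "(Zs p2 \<union> Ts p3) \<inter> {V 1, Z 1, Z 2, T 1, T 2} = {Z 1, Z 2, T 1, T 2}"
    "(Ts p3 \<union> Us p4) \<inter> {V 1, Z 1, Z 2, T 1, T 2} = {T 1, T 2}"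
    "(Us p4 \<union> Vs p0) \<inter> {V 1, Z 1, Z 2, T 1, T 2} = {V 1}"
    using pos by auto
  have "rays - E \<in> K \<longleftrightarrow>
      (\<forall>C\<in>{Vs p0 \<union> Ys p1, Ys p1 \<union> Zs p2, Zs p2 \<union> Ts p3, Ts p3 \<union> Us p4, Us p4 \<union> Vs p0}.
        \<not> C \<subseteq> rays - E)"
    by (rule fan_mem_iff_no_primitive_collection[OF fan prim]) blast
  also have "\<dots> \<longleftrightarrow> {V 1} \<inter> E \<noteq> {} \<and> {Z 1, Z 2} \<inter> E \<noteq> {} \<and> {Z 1, Z 2, T 1, T 2} \<inter> E \<noteq> {} \<and>
      {T 1, T 2} \<inter> E \<noteq> {}"
    by (simp only: ball_simps(5,7) avoids[OF sub(1)] avoids[OF sub(2)] avoids[OF sub(3)]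
        avoids[OF sub(4)] avoids[OF sub(5)] meet) blast
  finally show ?thesis by blast
qed

lemma surface_cone_in_K: "surface_cone \<in> K"
  unfolding surface_cone_def by (simp add: rays_minus_mem_iff)

lemma rays_minus_surface_cone: "rays - surface_cone = {V 1, Z 1, Z 2, T 1, T 2}"
  unfolding surface_cone_def using special_rays_mem by blast

lemma insert_surface_cone_mem_iff:
  assumes "k \<in> rays - surface_cone"
  shows "insert k surface_cone \<in> K \<longleftrightarrow> k \<in> {Z 1, Z 2} \<union> {T 1, T 2}"
proof -
  have "k \<in> {V 1, Z 1, Z 2, T 1, T 2}" using assms unfolding rays_minus_surface_cone .
  then show ?thesis
    unfolding surface_cone_def
    by (elim insertE emptyE) (simp_all add: insert_rays_minus rays_minus_mem_iff insert_Diff_if)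
qed

lemma linear_relation_YZU: "linear_relation rays g relation_YZU"
  using rel_YZU unfolding linear_relation_def sum_allrays
  by (simp add: relation_YZU_def vector_smult_lneg sum_negf)

lemma linear_relation_TUY: "linear_relation rays g relation_TUY"
proof -
  have "(\<Sum>k\<in>rays. relation_TUY k *s g k)
      = ((\<Sum>j=1..p3. g (T j)) + (\<Sum>j=1..p4. g (U j))) - (\<Sum>j=1..p1. g (Y j))"
    unfolding sum_allrays by (simp add: relation_TUY_def vector_smult_lneg sum_negf algebra_simps)
  then show ?thesis unfolding linear_relation_def rel_TUY by simp
qed

lemma curve_deg_Z_wall:
  assumes "z \<in> {Z 1, Z 2}" "\<rho> \<in> insert z surface_cone"
  shows "curve_deg rays K g (insert z surface_cone) \<rho> = relation_TUY \<rho>"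
proof (rule curve_deg_eq_wall_relation[OF fan _ assms(2) linear_relation_TUY])
  show "insert z surface_cone \<in> K"
    using assms(1) insert_surface_cone_mem_iff rays_minus_surface_cone by blast
  show "\<forall>k\<in>rays - insert z surface_cone.
      relation_TUY k = (if insert k (insert z surface_cone) \<in> K then 1 else 0)"
    using assms(1) unfolding surface_cone_def
    by (elim insertE emptyE) (simp_all add: insert_rays_minus Diff_Diff_Int rays_minus_mem_iff
        insert_Diff_if relation_TUY_def)
qed

lemma curve_deg_T_wall:
  assumes "t \<in> {T 1, T 2}" "\<rho> \<in> insert t surface_cone"
  shows "curve_deg rays K g (insert t surface_cone) \<rho> = relation_YZU \<rho>"
proof (rule curve_deg_eq_wall_relation[OF fan _ assms(2) linear_relation_YZU])
  show "insert t surface_cone \<in> K"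
    using assms(1) insert_surface_cone_mem_iff rays_minus_surface_cone by blast
  show "\<forall>k\<in>rays - insert t surface_cone.
      relation_YZU k = (if insert k (insert t surface_cone) \<in> K then 1 else 0)"
    using assms(1) unfolding surface_cone_def
    by (elim insertE emptyE) (simp_all add: insert_rays_minus Diff_Diff_Int rays_minus_mem_iff
        insert_Diff_if relation_YZU_def)
qed

lemma surf_int_surface_cone:
  assumes "\<rho> \<in> rays"
  shows "surf_int rays K g surface_cone \<rho> \<rho> = 2 * relation_YZU \<rho> * relation_TUY \<rho>"
proof (rule surf_int_self_two_wall_pairs[OF fan surface_cone_in_K _ _ linear_relation_YZU _
      linear_relation_TUY _ curve_deg_Z_wall curve_deg_T_wall assms])
  show "{k \<in> rays - surface_cone. insert k surface_cone \<in> K} = {Z 1, Z 2} \<union> {T 1, T 2}"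
    using insert_surface_cone_mem_iff rays_minus_surface_cone by blast
  show "\<forall>k\<in>rays - surface_cone. relation_YZU k = (if k \<in> {Z 1, Z 2} then 1 else 0)"
    "\<forall>k\<in>rays - surface_cone. relation_TUY k = (if k \<in> {T 1, T 2} then 1 else 0)"
    unfolding rays_minus_surface_cone by (simp_all add: relation_YZU_def relation_TUY_def)
qed simp

lemma ch2_dot_surface_cone: "ch2_dot rays K g surface_cone = - real (p1 + p4)"
proof -
  have "ch2_dot rays K g surface_cone = (\<Sum>\<rho>\<in>rays. real_of_int (relation_YZU \<rho> * relation_TUY \<rho>))"
    unfolding ch2_dot_def sum_distrib_left
    by (rule sum.cong) (simp_all add: surf_int_surface_cone)
  also have "\<dots> = - real (p1 + p4)"
    unfolding sum_allrays by (simp add: relation_YZU_def relation_TUY_def)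
  finally show ?thesis .
qed

lemma card_rays: "card rays = p0 + p1 + p2 + p3 + p4"
  unfolding card_eq_sum sum_allrays by simp

lemma surface_cone_dual_pair:
  obtains m1 m2 :: "int^'d"
  where "ipair m1 (g (Z 1)) = 1" "ipair m2 (g (Z 1)) = 0" "ipair m1 (g (T 1)) = 0" "ipair m2 (g (T 1)) = 1"
    "ipair m1 (g (Z 2)) = -1" "ipair m2 (g (Z 2)) = 0" "ipair m1 (g (T 2)) = 0" "ipair m2 (g (T 2)) = -1"
    "{v. (ipair m1 v, ipair m2 v) = (0, 0)} = zspan (g ` surface_cone)"
proof -
  define \<sigma> where "\<sigma> = rays - {V 1, Z 2, T 2}"
  have \<sigma>_K: "\<sigma> \<in> K" unfolding \<sigma>_def by (simp add: rays_minus_mem_iff)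
  have \<sigma>_eq: "\<sigma> = insert (Z 1) (insert (T 1) surface_cone)"
    unfolding \<sigma>_def surface_cone_def by auto
  have card: "card \<sigma> = CARD('d)"
    using card_Diff_subset[of "{V 1, Z 2, T 2}" rays] special_rays_mem card_rays dim
    unfolding \<sigma>_def by simp
  obtain m where dual: "\<And>k j. k \<in> \<sigma> \<Longrightarrow> j \<in> \<sigma> \<Longrightarrow> ipair (m k) (g j) = (if j = k then 1 else 0)"
    and span: "\<And>v. card \<sigma> = CARD('d) \<Longrightarrow> v = (\<Sum>k\<in>\<sigma>. ipair (m k) v *s g k)"
    using unimodular_dual_basis[OF smooth_projective_complete_fanD(5)[OF fan \<sigma>_K]] by metis
  have outside: "rays - \<sigma> = {V 1, Z 2, T 2}" unfolding \<sigma>_def using special_rays_mem by blast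
  have eval: "a k + (\<Sum>j\<in>{V 1, Z 2, T 2}. a j * ipair (m k) (g j)) = 0"
    if "linear_relation rays g a" "k \<in> \<sigma>" for a k
    using linear_relation_eval[OF that(1) smooth_projective_complete_fanD(1)[OF fan]
        smooth_projective_complete_fanD(3)[OF fan \<sigma>_K] that(2)] dual that(2) outside by simp
  have Z1: "Z 1 \<in> \<sigma>" and T1: "T 1 \<in> \<sigma>" unfolding \<sigma>_eq by simp_all
  have fin: "finite \<sigma>"
    using finite_subset[OF smooth_projective_complete_fanD(3)[OF fan \<sigma>_K]
        smooth_projective_complete_fanD(1)[OF fan]] .
  have sub: "surface_cone \<subseteq> \<sigma>" unfolding \<sigma>_eq by blast
  have inj: "inj_on g surface_cone"
    using smooth_projective_complete_fanD(2)[OF fan] unfolding surface_cone_def by (rule inj_on_subset) blast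
  have "{v. \<forall>k\<in>\<sigma> - surface_cone. ipair (m k) v = 0} = zspan (g ` surface_cone)"
    by (rule dual_kernel_eq_zspan[OF dual span[OF card] fin sub inj])
  moreover have "\<sigma> - surface_cone = {Z 1, T 1}" unfolding \<sigma>_eq surface_cone_def by auto
  ultimately have "{v. (ipair (m (Z 1)) v, ipair (m (T 1)) v) = (0, 0)} = zspan (g ` surface_cone)"
    by simp
  then show thesis
    using that[of "m (Z 1)" "m (T 1)"] dual[OF Z1] dual[OF T1] Z1 T1
      eval[OF linear_relation_YZU Z1] eval[OF linear_relation_YZU T1]
      eval[OF linear_relation_TUY Z1] eval[OF linear_relation_TUY T1]
    by (simp add: relation_YZU_def relation_TUY_def)
qed

lemma surface_cone_P1xP1: "surface_is_P1xP1 rays K g surface_cone"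
proof -
  obtain m1 m2 where coords:
    "ipair m1 (g (Z 1)) = 1" "ipair m2 (g (Z 1)) = 0" "ipair m1 (g (T 1)) = 0" "ipair m2 (g (T 1)) = 1"
    "ipair m1 (g (Z 2)) = -1" "ipair m2 (g (Z 2)) = 0" "ipair m1 (g (T 2)) = 0" "ipair m2 (g (T 2)) = -1"
    and kernel: "{v. (ipair m1 v, ipair m2 v) = (0, 0)} = zspan (g ` surface_cone)"
    by (rule surface_cone_dual_pair)
  have star: "{k \<in> rays - surface_cone. insert k surface_cone \<in> K} = {Z 1, Z 2, T 1, T 2}"
    using insert_surface_cone_mem_iff rays_minus_surface_cone by blast
  have onto: "\<exists>v. (ipair m1 v, ipair m2 v) = w" for w
    by (rule exI[of _ "fst w *s g (Z 1) + snd w *s g (T 1)"]) (simp add: ipair_add ipair_smult coords)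
  show ?thesis
    unfolding surface_is_P1xP1_def Let_def star
  proof (rule conjI[OF surface_cone_in_K], rule exI[of _ m1], rule exI[of _ m2], intro conjI kernel)
    show "\<forall>w. \<exists>v. (ipair m1 v, ipair m2 v) = w" using onto by blast
    show "bij_betw ((\<lambda>v. (ipair m1 v, ipair m2 v)) \<circ> g) {Z 1, Z 2, T 1, T 2}
        {(1, 0), (0, 1), (-1, 0), (0, -1)}"
      using coords by (auto simp: bij_betw_def inj_on_def)
    show "\<forall>k\<in>{Z 1, Z 2, T 1, T 2}. \<forall>k'\<in>{Z 1, Z 2, T 1, T 2}. k \<noteq> k' \<longrightarrow>
        ({k, k'} \<union> surface_cone \<in> K \<longleftrightarrow>
         (ipair m1 (g k), ipair m2 (g k)) \<noteq> - (ipair m1 (g k'), ipair m2 (g k')))"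
      using coords
      by (simp add: surface_cone_def insert_rays_minus rays_minus_mem_iff insert_Diff_if)
  qed
qed

end

theorem mainTheorem6:
  fixes p0 p1 p2 p3 p4 :: nat
    and g :: "ray \<Rightarrow> int^'d"
    and K :: "ray set set"
    and b c :: "nat \<Rightarrow> int"
  assumes pos: "p0 \<ge> 1" "p1 \<ge> 1" "p2 \<ge> 1" "p3 \<ge> 1" "p4 \<ge> 1"
    and dim: "CARD('d) = p0 + p1 + p2 + p3 + p4 - 3"
    and fan: "smooth_projective_complete_fan (allrays p0 p1 p2 p3 p4) K g"
    and prim: "\<And>C. primitive_collection (allrays p0 p1 p2 p3 p4) K C \<longleftrightarrow>
                 C \<in> {Vs p0 \<union> Ys p1, Ys p1 \<union> Zs p2, Zs p2 \<union> Ts p3, Ts p3 \<union> Us p4, Us p4 \<union> Vs p0}"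
    and bnn: "\<And>i. b i \<ge> 0" and cnn: "\<And>j. c j \<ge> 0"
    and cmin: "\<forall>j\<in>{2..p2}. c 2 \<le> c j"
    and bmin: "\<forall>i\<in>{1..p3}. b 1 \<le> b i"
    and r1: "(\<Sum>i=1..p0. g (V i)) + (\<Sum>j=1..p1. g (Y j)) =
             (\<Sum>j=2..p2. c j *s g (Z j)) + (\<Sum>i=1..p3. (b i + 1) *s g (T i))"
    and r2: "(\<Sum>j=1..p1. g (Y j)) + (\<Sum>j=1..p2. g (Z j)) = (\<Sum>j=1..p4. g (U j))"
    and r3: "(\<Sum>j=1..p2. g (Z j)) + (\<Sum>j=1..p3. g (T j)) = 0"
    and r4: "(\<Sum>j=1..p3. g (T j)) + (\<Sum>j=1..p4. g (U j)) = (\<Sum>j=1..p1. g (Y j))"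
    and r5: "(\<Sum>j=1..p4. g (U j)) + (\<Sum>i=1..p0. g (V i)) =
             (\<Sum>j=2..p2. c j *s g (Z j)) + (\<Sum>i=1..p3. b i *s g (T i))"
    and p2ge: "p2 \<ge> 2" and p3ge: "p3 \<ge> 2"
  shows "let \<tau> = allrays p0 p1 p2 p3 p4 - {V 1, Z 1, Z 2, T 1, T 2} in
           \<tau> \<in> K \<and> surface_is_P1xP1 (allrays p0 p1 p2 p3 p4) K g \<tau> \<and>
           ch2_dot (allrays p0 p1 p2 p3 p4) K g \<tau> = - real (p1 + p4) \<and>
           ch2_dot (allrays p0 p1 p2 p3 p4) K g \<tau> < 0"
proof -
  \<comment> \<open>Only the relations for \<open>{y, z}\<close> and \<open>{t, u}\<close> enter.\<close>
  interpret pentagon_fan p0 p1 p2 p3 p4 g K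
    using pos p2ge p3ge dim fan prim r2 r4 by unfold_locales
  show ?thesis
    using surface_cone_in_K surface_cone_P1xP1 ch2_dot_surface_cone pos
    unfolding surface_cone_def Let_def by simp
qed

end
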